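(* Suppose that $\rho\ge2$, that $\rho=t-\Theta(1)$, and that $a=t+O(1)$ is a positive integer. Then $x_t(\rho)+a\,y_t(\rho)=\log(d_a)+O(1)$. (That is, for fixed constants bounding $t-\rho$ above and below by positive constants and bounding $|a-t|$, the difference $x_t(\rho)+ay_t(\rho)-\log d_a$ is bounded uniformly.)
   Context: $d_i=2^{\binom i2}i!$. For positive integer $t$ and real $1<\rho<t$, $x_t(\rho),y_t(\rho)$ are the unique reals $x,y$ with $\sum_{i=1}^t e^{x+iy}d_i^{-1}=1$ and $\sum_{i=1}^t ie^{x+iy}d_i^{-1}=\rho$. Logarithms are natural. *)

theory Defs
  imports Complex_Main
begin

definition d :: "nat \<Rightarrow> real" where
  "d i = 2 ^ (i choose 2) * fact i"

definition xy_eqs :: "nat \<Rightarrow> real \<Rightarrow> real \<Rightarrow> real \<Rightarrow> bool" where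
  "xy_eqs t \<rho> x y \<longleftrightarrow>
     (\<Sum>i=1..t. exp (x + real i * y) / d i) = 1 \<and>
     (\<Sum>i=1..t. real i * exp (x + real i * y) / d i) = \<rho>"

definition xt :: "nat \<Rightarrow> real \<Rightarrow> real" where
  "xt t \<rho> = fst (THE p. xy_eqs t \<rho> (fst p) (snd p))"

definition yt :: "nat \<Rightarrow> real \<Rightarrow> real" where
  "yt t \<rho> = snd (THE p. xy_eqs t \<rho> (fst p) (snd p))"

end

theory Submission
  imports Defs
begin

(* Put l = exp y and weight l i = l^i / d i. The equations say that exp x * weight l i is a
   probability distribution on {1..t} with mean rho, so x = -ln (sum of the weights) and rho is
   the weighted mean of the index. A Chebyshev-type rearrangement shows that this mean is
   strictly increasing in l, which gives existence and uniqueness of (x, y).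
   Consecutive weights have ratio l / (2^i (i+1)), so relative to S = 2^(t-1) t the weights
   below the top index decay factorially when l >= S / A, and those above index t - 1 - N halve
   at every step when l <= S / (2 * 4^N). The first makes the mean exceed t - A exp A, the
   second pushes it below max 2 (t - N); hence exp y lies within constant factors of S. Then
   the top weight carries a fraction at least exp (-O(1)) of the total, i.e.
   x + t y - ln d_t = O(1), and each step n -> n + 1 changes n y - ln d_n by
   y - n ln 2 - ln (n + 1) = O(1) while n stays within O(1) of t. *)

lemma d_pos: "0 < d i"
  unfolding d_def by simp

lemma d_Suc: "d (Suc i) = d i * 2 ^ i * real (Suc i)"
proof -
  have "Suc i choose 2 = (i choose 2) + i"
    by (simp add: numeral_2_eq_2)
  then show ?thesis
    unfolding d_def by (simp add: power_add algebra_simps)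
qed

lemma ln_d_Suc: "ln (d (Suc n)) = ln (d n) + real n * ln 2 + ln (real (Suc n))"
  using d_pos[of n] by (simp add: d_Suc ln_mult ln_realpow del: of_nat_Suc)

definition weight :: "real \<Rightarrow> nat \<Rightarrow> real" where
  "weight l i = l ^ i / d i"

definition weight_sum :: "nat \<Rightarrow> real \<Rightarrow> real" where
  "weight_sum t l = (\<Sum>i=1..t. weight l i)"

definition weight_mean :: "nat \<Rightarrow> real \<Rightarrow> real" where
  "weight_mean t l = (\<Sum>i=1..t. real i * weight l i) / weight_sum t l"

lemma weight_pos: "0 < l \<Longrightarrow> 0 < weight l i"
  unfolding weight_def using d_pos[of i] by simp

lemma weight_Suc: "weight l (Suc i) = weight l i * (l / (2 ^ i * real (Suc i)))"
  unfolding weight_def d_Suc using d_pos[of i] by (simp add: field_simps del: of_nat_Suc)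

lemma weight_sum_pos: "0 < l \<Longrightarrow> 1 \<le> t \<Longrightarrow> 0 < weight_sum t l"
  unfolding weight_sum_def by (intro sum_pos) (auto intro: weight_pos)

lemma weight_le_weight_sum: "0 < l \<Longrightarrow> i \<in> {1..t} \<Longrightarrow> weight l i \<le> weight_sum t l"
  unfolding weight_sum_def by (rule member_le_sum) (auto intro: less_imp_le weight_pos)

lemma xy_eqs_iff:
  assumes "1 \<le> t"
  shows "xy_eqs t \<rho> x y \<longleftrightarrow>
           exp x = 1 / weight_sum t (exp y) \<and> weight_mean t (exp y) = \<rho>"
proof -
  have "exp (x + real i * y) / d i = exp x * weight (exp y) i"
    and "real i * exp (x + real i * y) / d i = real i * (exp x * weight (exp y) i)" for i
    by (simp_all add: weight_def exp_add exp_of_nat_mult)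
  then have "xy_eqs t \<rho> x y \<longleftrightarrow>
               exp x * weight_sum t (exp y) = 1 \<and>
               exp x * (\<Sum>i=1..t. real i * weight (exp y) i) = \<rho>"
    unfolding xy_eqs_def weight_sum_def by (simp add: sum_distrib_left mult_ac)
  moreover have "0 < weight_sum t (exp y)"
    using assms by (simp add: weight_sum_pos)
  ultimately show ?thesis
    unfolding weight_mean_def by (auto simp: field_simps)
qed

lemma power_cross_less:
  fixes l l' :: real
  assumes "0 < l" "l < l'" "j < i"
  shows "l' ^ j * l ^ i < l' ^ i * l ^ j"
proof -
  obtain k where i: "i = j + k" and "0 < k"
    using assms(3) less_imp_add_positive by blast
  then have "l ^ k < l' ^ k"
    using assms by (intro power_strict_mono) auto
  moreover have "0 < l' ^ j * l ^ j"
    using assms by simp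
  ultimately have "l' ^ j * l ^ j * l ^ k < l' ^ j * l ^ j * l' ^ k"
    by (rule mult_strict_left_mono)
  then show ?thesis
    unfolding i by (simp add: power_add mult_ac)
qed

lemma mean_index_less_of_ratio_increasing:
  fixes a b :: "nat \<Rightarrow> real"
  assumes "finite I"
    and ratio: "\<And>i j. i \<in> I \<Longrightarrow> j \<in> I \<Longrightarrow> j < i \<Longrightarrow> a j * b i < a i * b j"
    and "i \<in> I" "j \<in> I" "j < i"
  shows "(\<Sum>k\<in>I. real k * b k) * (\<Sum>k\<in>I. a k) < (\<Sum>k\<in>I. real k * a k) * (\<Sum>k\<in>I. b k)"
proof -
  define h where "h i j = (real i - real j) * (a i * b j - a j * b i)" for i j
  have h_nonneg: "0 \<le> h i j" if "i \<in> I" "j \<in> I" for i j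
    using ratio[OF that] ratio[OF that(2,1)]
    by (cases i j rule: linorder_cases)
      (auto simp: h_def intro: mult_nonneg_nonneg mult_nonpos_nonpos)
  have "0 < h i j"
    using ratio[OF \<open>i \<in> I\<close> \<open>j \<in> I\<close> \<open>j < i\<close>] \<open>j < i\<close> by (simp add: h_def)
  then have "0 < (\<Sum>j'\<in>I. h i j')"
    using assms(1,4) h_nonneg \<open>i \<in> I\<close> by (intro sum_pos2[where i = j]) auto
  then have "0 < (\<Sum>i'\<in>I. \<Sum>j'\<in>I. h i' j')"
    using assms(1,3) h_nonneg
    by (intro sum_pos2[where i = i and f = "\<lambda>i'. \<Sum>j'\<in>I. h i' j'"]) (auto intro: sum_nonneg)
  moreover have "(\<Sum>i\<in>I. \<Sum>j\<in>I. h i j) =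
      2 * ((\<Sum>k\<in>I. real k * a k) * (\<Sum>k\<in>I. b k) - (\<Sum>k\<in>I. a k) * (\<Sum>k\<in>I. real k * b k))"
  proof -
    define g where "g i j = (real i - real j) * a i * b j" for i j
    have "h i j = g i j + g j i" for i j
      by (simp add: h_def g_def algebra_simps)
    then have "(\<Sum>i\<in>I. \<Sum>j\<in>I. h i j) = (\<Sum>i\<in>I. \<Sum>j\<in>I. g i j) + (\<Sum>i\<in>I. \<Sum>j\<in>I. g j i)"
      by (simp add: sum.distrib)
    also have "(\<Sum>i\<in>I. \<Sum>j\<in>I. g j i) = (\<Sum>i\<in>I. \<Sum>j\<in>I. g i j)"
      by (rule sum.swap)
    also have "(\<Sum>i\<in>I. \<Sum>j\<in>I. g i j) =
        (\<Sum>k\<in>I. real k * a k) * (\<Sum>k\<in>I. b k) - (\<Sum>k\<in>I. a k) * (\<Sum>k\<in>I. real k * b k)"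
      unfolding g_def sum_product by (simp add: sum_subtractf[symmetric] algebra_simps)
    finally show ?thesis
      by simp
  qed
  ultimately show ?thesis
    by (simp add: mult.commute)
qed

lemma weight_mean_strict_mono:
  assumes "2 \<le> t"
  shows "strict_mono_on {0<..} (weight_mean t)"
proof (rule strict_mono_onI)
  fix l l' :: real
  assume "l \<in> {0<..}" "l' \<in> {0<..}" "l < l'"
  then have l: "0 < l" "l < l'"
    by auto
  have "(\<Sum>i=1..t. real i * weight l i) * weight_sum t l' <
        (\<Sum>i=1..t. real i * weight l' i) * weight_sum t l"
    unfolding weight_sum_def
  proof (rule mean_index_less_of_ratio_increasing[where i = 2 and j = 1])
    show "weight l' j * weight l i < weight l' i * weight l j" if "j < i" for i j
      using power_cross_less[OF l that] d_pos[of i] d_pos[of j]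
      by (simp add: weight_def field_simps)
  qed (use assms in auto)
  then show "weight_mean t l < weight_mean t l'"
    using weight_sum_pos[of l t] weight_sum_pos[of l' t] l assms
    by (simp add: weight_mean_def divide_simps)
qed

lemma continuous_on_weight_mean:
  assumes "1 \<le> t"
  shows "continuous_on {0<..} (weight_mean t)"
proof -
  have "d i \<noteq> 0" for i
    using d_pos[of i] by simp
  moreover have "(\<Sum>i=1..t. l ^ i / d i) \<noteq> 0" if "0 < l" for l
    using weight_sum_pos[OF that assms] by (simp add: weight_sum_def weight_def)
  ultimately show ?thesis
    unfolding weight_mean_def weight_sum_def weight_def by (intro continuous_intros) auto
qed

lemma xy_eqs_exp_between:
  assumes "2 \<le> t" "0 < l1" "l1 \<le> l2"
    and "weight_mean t l1 \<le> \<rho>" "\<rho> \<le> weight_mean t l2"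
    and "xy_eqs t \<rho> x y"
  shows "l1 \<le> exp y \<and> exp y \<le> l2"
proof -
  have mean: "weight_mean t (exp y) = \<rho>"
    using assms by (simp add: xy_eqs_iff)
  have mono: "weight_mean t u \<le> weight_mean t v \<longleftrightarrow> u \<le> v" if "0 < u" "0 < v" for u v
    using strict_mono_on_less_eq[OF weight_mean_strict_mono[OF assms(1)]] that by simp
  show ?thesis
    using mono[of l1 "exp y"] mono[of "exp y" l2] mean assms(2-5) by simp
qed

lemma xy_eqs_ex1:
  assumes "2 \<le> t" "0 < l1" "l1 \<le> l2"
    and "weight_mean t l1 \<le> \<rho>" "\<rho> \<le> weight_mean t l2"
  shows "\<exists>!p. xy_eqs t \<rho> (fst p) (snd p)"
proof -
  have t: "1 \<le> t"
    using assms(1) by simp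
  obtain l where l: "l1 \<le> l" "weight_mean t l = \<rho>"
    using IVT'[of "weight_mean t" l1 \<rho> l2] assms
      continuous_on_subset[OF continuous_on_weight_mean[OF t], of "{l1..l2}"]
    by force
  have "0 < l"
    using l assms(2) by simp
  then have "xy_eqs t \<rho> (- ln (weight_sum t l)) (ln l)"
    using l weight_sum_pos[OF _ t] by (simp add: xy_eqs_iff[OF t] exp_minus inverse_eq_divide)
  moreover have "p = q" if "xy_eqs t \<rho> (fst p) (snd p)" "xy_eqs t \<rho> (fst q) (snd q)" for p q
  proof -
    have "weight_mean t (exp (snd p)) = weight_mean t (exp (snd q))"
      using that by (simp add: xy_eqs_iff[OF t])
    then have "snd p = snd q"
      using strict_mono_on_eqD[OF weight_mean_strict_mono[OF assms(1)]] by fastforce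
    moreover from this have "exp (fst p) = exp (fst q)"
      using that by (simp add: xy_eqs_iff[OF t])
    then have "fst p = fst q"
      by simp
    ultimately show ?thesis
      by (simp add: prod_eq_iff)
  qed
  ultimately show ?thesis
    by (intro ex1I[of _ "(- ln (weight_sum t l), ln l)"]) auto
qed

(* weight l (Suc i) / weight l i = l / (2^i (i+1)), which is l / scale t at i = t - 1:
   the weights peak near index t when l is comparable to scale t. *)
definition scale :: "nat \<Rightarrow> real" where
  "scale t = 2 ^ (t - 1) * real t"

lemma scale_pos: "1 \<le> t \<Longrightarrow> 0 < scale t"
  unfolding scale_def by simp

lemma ln_scale: "1 \<le> t \<Longrightarrow> ln (scale t) = (real t - 1) * ln 2 + ln (real t)"
  by (simp add: scale_def ln_mult ln_realpow of_nat_diff)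

lemma scale_ge:
  assumes "i < t"
  shows "2 ^ i * real (Suc i) * real (t - i) \<le> scale t"
proof -
  obtain k where t: "t = Suc (i + k)"
    using assms less_iff_Suc_add by auto
  have "Suc k \<le> 2 ^ k"
    by (rule Suc_leI) (rule less_exp)
  then have "2 ^ i * Suc i * Suc k \<le> 2 ^ i * Suc i * 2 ^ k"
    by (rule mult_le_mono2)
  also have "\<dots> = 2 ^ (i + k) * Suc i"
    by (simp add: power_add algebra_simps)
  also have "\<dots> \<le> 2 ^ (i + k) * Suc (i + k)"
    by (rule mult_le_mono2) simp
  finally have "2 ^ i * Suc i * (t - i) \<le> 2 ^ (t - 1) * t"
    by (simp add: t)
  then have "real (2 ^ i * Suc i * (t - i)) \<le> real (2 ^ (t - 1) * t)"
    by (simp only: of_nat_le_iff)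
  then show ?thesis
    unfolding scale_def by (simp only: of_nat_mult of_nat_power of_nat_numeral)
qed

lemma scale_le:
  assumes "i < t"
  shows "scale t \<le> 4 ^ (t - Suc i) * (2 ^ i * real (Suc i))"
proof -
  obtain k where t: "t = Suc (i + k)"
    using assms less_iff_Suc_add by auto
  have "Suc k \<le> 2 ^ k"
    by (rule Suc_leI) (rule less_exp)
  have "Suc (i + k) \<le> Suc i * Suc k"
    by simp
  also have "\<dots> \<le> Suc i * 2 ^ k"
    using \<open>Suc k \<le> 2 ^ k\<close> by (rule mult_le_mono2)
  finally have "2 ^ (i + k) * Suc (i + k) \<le> 2 ^ (i + k) * (Suc i * 2 ^ k)"
    by (rule mult_le_mono2)
  also have "\<dots> = (2 ^ k * 2 ^ k) * (2 ^ i * Suc i)"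
    by (simp add: power_add algebra_simps)
  also have "(2::nat) ^ k * 2 ^ k = 4 ^ k"
    by (simp add: power_mult_distrib[symmetric])
  finally have "2 ^ (t - 1) * t \<le> 4 ^ (t - Suc i) * (2 ^ i * Suc i)"
    by (simp add: t)
  then have "real (2 ^ (t - 1) * t) \<le> real (4 ^ (t - Suc i) * (2 ^ i * Suc i))"
    by (simp only: of_nat_le_iff)
  then show ?thesis
    unfolding scale_def by (simp only: of_nat_mult of_nat_power of_nat_numeral)
qed

lemma weight_le_weight_Suc:
  assumes "0 < A" "0 < l" "scale t \<le> A * l" "i < t"
  shows "weight l i \<le> weight l (Suc i) * A / real (t - i)"
proof -
  have "2 ^ i * real (Suc i) * real (t - i) \<le> A * l"
    using scale_ge[OF assms(4)] assms(3) by linarith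
  then have "1 \<le> l / (2 ^ i * real (Suc i)) * A / real (t - i)"
    using assms by (simp add: field_simps del: of_nat_Suc)
  from mult_left_mono[OF this less_imp_le[OF weight_pos[OF assms(2), of i]]] show ?thesis
    by (simp add: weight_Suc mult_ac)
qed

lemma weight_Suc_le_half:
  assumes "0 < l" "2 * 4 ^ N * l \<le> scale t" "i < t" "t \<le> i + 1 + N"
  shows "2 * weight l (Suc i) \<le> weight l i"
proof -
  have "(4::real) ^ (t - Suc i) \<le> 4 ^ N"
    using assms(4) by (intro power_increasing) auto
  then have scale: "scale t \<le> 4 ^ N * (2 ^ i * real (Suc i))"
    using order_trans[OF scale_le[OF assms(3)] mult_right_mono] by simp
  have "4 ^ N * (2 * l) = 2 * 4 ^ N * l"
    by simp
  also have "\<dots> \<le> scale t"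
    by (rule assms(2))
  finally have "4 ^ N * (2 * l) \<le> 4 ^ N * (2 ^ i * real (Suc i))"
    using scale by linarith
  then have "2 * (l / (2 ^ i * real (Suc i))) \<le> 1"
    by (simp add: field_simps del: of_nat_Suc)
  from mult_left_mono[OF this less_imp_le[OF weight_pos[OF assms(1), of i]]] show ?thesis
    by (simp add: weight_Suc mult_ac)
qed

lemma weight_below_peak:
  assumes "0 < A" "0 < l" "scale t \<le> A * l" "k < t"
  shows "weight l (t - k) \<le> weight l t * A ^ k / fact k"
  using assms(4)
proof (induction k)
  case 0
  then show ?case
    by simp
next
  case (Suc k)
  have i: "t - Suc k < t" "Suc (t - Suc k) = t - k" "t - (t - Suc k) = Suc k"
    using Suc.prems by auto
  have "weight l (t - Suc k) \<le> weight l (t - k) * A / real (Suc k)"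
    using weight_le_weight_Suc[OF assms(1-3) i(1)] by (simp only: i(2,3))
  also have "\<dots> \<le> (weight l t * A ^ k / fact k) * A / real (Suc k)"
    using Suc assms(1) by (intro divide_right_mono mult_right_mono) auto
  also have "\<dots> = weight l t * A ^ Suc k / fact (Suc k)"
    by (simp add: field_simps)
  finally show ?case .
qed

lemma sum_power_div_fact_le_exp:
  fixes A :: real
  assumes "0 \<le> A"
  shows "(\<Sum>k<n. A ^ k / fact k) \<le> exp A"
proof -
  have sums: "(\<lambda>k. A ^ k / fact k) sums exp A"
    using exp_converges[of A] by (simp add: divide_inverse mult_ac)
  show ?thesis
    using sum_le_suminf[OF sums_summable[OF sums], of "{..<n}"] sums_unique[OF sums] assms
    by simp
qed

lemma sum_index_power_div_fact:
  fixes A :: real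
  shows "(\<Sum>k<Suc n. real k * A ^ k / fact k) = A * (\<Sum>k<n. A ^ k / fact k)"
proof (induction n)
  case 0
  then show ?case
    by simp
next
  case (Suc n)
  have "real (Suc n) * A ^ Suc n / fact (Suc n) = A * (A ^ n / fact n)"
    by (simp add: field_simps del: of_nat_Suc)
  with Suc show ?case
    by (simp add: algebra_simps)
qed

lemma sum_reflect_atLeastAtMost:
  fixes f :: "nat \<Rightarrow> 'a::comm_monoid_add"
  shows "(\<Sum>i=1..t. f i) = (\<Sum>k<t. f (t - k))"
  by (rule sum.reindex_bij_witness[where i = "\<lambda>k. t - k" and j = "\<lambda>i. t - i"]) auto

lemma weight_sum_le_peak:
  assumes "0 < A" "0 < l" "scale t \<le> A * l"
  shows "weight_sum t l \<le> weight l t * exp A"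
proof -
  have "weight_sum t l = (\<Sum>k<t. weight l (t - k))"
    unfolding weight_sum_def by (rule sum_reflect_atLeastAtMost)
  also have "\<dots> \<le> (\<Sum>k<t. weight l t * (A ^ k / fact k))"
    using weight_below_peak[OF assms] by (intro sum_mono) auto
  also have "\<dots> = weight l t * (\<Sum>k<t. A ^ k / fact k)"
    by (simp add: sum_distrib_left)
  also have "\<dots> \<le> weight l t * exp A"
    using sum_power_div_fact_le_exp[of A t] assms weight_pos[OF assms(2), of t]
    by (intro mult_left_mono) auto
  finally show ?thesis .
qed

lemma weight_deficit_le_peak:
  assumes "0 < A" "0 < l" "scale t \<le> A * l"
  shows "(\<Sum>i=1..t. real (t - i) * weight l i) \<le> weight l t * (A * exp A)"
proof -
  have "(\<Sum>i=1..t. real (t - i) * weight l i) = (\<Sum>k<t. real k * weight l (t - k))"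
    by (subst sum_reflect_atLeastAtMost) (intro sum.cong; auto)
  also have "\<dots> \<le> (\<Sum>k<t. weight l t * (real k * A ^ k / fact k))"
  proof (rule sum_mono)
    fix k
    assume "k \<in> {..<t}"
    then have "real k * weight l (t - k) \<le> real k * (weight l t * A ^ k / fact k)"
      using weight_below_peak[OF assms] by (intro mult_left_mono) auto
    then show "real k * weight l (t - k) \<le> weight l t * (real k * A ^ k / fact k)"
      by (simp add: mult_ac)
  qed
  also have "\<dots> = weight l t * (\<Sum>k<t. real k * A ^ k / fact k)"
    by (simp add: sum_distrib_left)
  also have "\<dots> \<le> weight l t * (A * exp A)"
  proof (cases t)
    case (Suc n)
    have "A * (\<Sum>k<n. A ^ k / fact k) \<le> A * exp A"
      using assms by (intro mult_left_mono sum_power_div_fact_le_exp) auto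
    then show ?thesis
      unfolding Suc sum_index_power_div_fact
      by (rule mult_left_mono) (use weight_pos[OF assms(2), of "Suc n"] in auto)
  qed (use assms weight_pos[OF assms(2), of 0] in simp)
  finally show ?thesis .
qed

lemma weight_mean_gt:
  assumes "1 \<le> t" "0 < A" "A * exp A < c" "scale t \<le> A * l"
  shows "real t - c < weight_mean t l"
proof -
  have "0 < A * l"
    using scale_pos[OF assms(1)] assms(4) by linarith
  then have l: "0 < l"
    using assms(2) zero_less_mult_pos by blast
  have Z: "0 < weight_sum t l"
    using weight_sum_pos[OF l assms(1)] .
  have "real t * weight_sum t l - (\<Sum>i=1..t. real i * weight l i) =
        (\<Sum>i=1..t. real (t - i) * weight l i)"
    unfolding weight_sum_def sum_distrib_left
    by (simp add: sum_subtractf[symmetric] of_nat_diff left_diff_distrib)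
  also have "\<dots> \<le> weight l t * (A * exp A)"
    using weight_deficit_le_peak[OF assms(2) l assms(4)] .
  also have "\<dots> < weight l t * c"
    using assms(3) weight_pos[OF l] by (rule mult_strict_left_mono)
  also have "\<dots> \<le> weight_sum t l * c"
    using weight_le_weight_sum[OF l, of t] assms(1-3)
    by (intro mult_right_mono) (auto intro: order_trans[OF _ less_imp_le[OF assms(3)]])
  finally show ?thesis
    using Z by (simp add: weight_mean_def field_simps)
qed

lemma sum_centered_neg_of_halving:
  fixes w :: "nat \<Rightarrow> real"
  assumes "1 \<le> m" "m \<le> t" "\<And>i. 0 < w i" "\<And>i. m \<le> i \<Longrightarrow> i < t \<Longrightarrow> 2 * w (Suc i) \<le> w i"
  shows "(\<Sum>i=1..t. (real i - real m - 1) * w i) < 0"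
proof -
  have "(\<Sum>i=1..m + j. (real i - real m - 1) * w i) \<le> - real (Suc j) * w (m + j)"
    if "m + j \<le> t" for j
    using that
  proof (induction j)
    case 0
    obtain m' where m: "m = Suc m'"
      using assms(1) by (cases m) auto
    have "(\<Sum>i=1..m'. (real i - real m - 1) * w i) \<le> 0"
      using assms(3) by (intro sum_nonpos mult_nonpos_nonneg) (auto simp: m less_imp_le)
    then show ?case
      by (simp add: m)
  next
    case (Suc j)
    have "2 * w (Suc (m + j)) \<le> w (m + j)"
      using Suc.prems assms(4) by simp
    then have "real (Suc j) * (2 * w (Suc (m + j))) \<le> real (Suc j) * w (m + j)"
      by (rule mult_left_mono) simp
    then have "- real (Suc j) * w (m + j) + real j * w (Suc (m + j)) \<le>
        - real (Suc (Suc j)) * w (Suc (m + j))"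
      by (simp add: algebra_simps)
    with Suc show ?case
      by simp
  qed
  from this[of "t - m"]
  have "(\<Sum>i=1..t. (real i - real m - 1) * w i) \<le> - real (Suc (t - m)) * w t"
    using assms(2) by simp
  moreover have "0 < real (Suc (t - m)) * w t"
    using assms(3) by simp
  ultimately show ?thesis
    by linarith
qed

lemma weight_mean_lt:
  assumes "2 \<le> t" "0 < l" "2 * 4 ^ N * l \<le> scale t" "2 \<le> \<rho>" "real t - real N \<le> \<rho>"
  shows "weight_mean t l < \<rho>"
proof -
  define m where "m = max 1 (t - 1 - N)"
  have m: "1 \<le> m" "m \<le> t" "real m + 1 \<le> \<rho>"
    using assms(1,4,5) by (auto simp: m_def of_nat_diff)
  have "(\<Sum>i=1..t. (real i - real m - 1) * weight l i) < 0"
  proof (rule sum_centered_neg_of_halving[OF m(1,2)])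
    show "2 * weight l (Suc i) \<le> weight l i" if "m \<le> i" "i < t" for i
    proof (rule weight_Suc_le_half[OF assms(2,3) \<open>i < t\<close>])
      show "t \<le> i + 1 + N"
        using that unfolding m_def by arith
    qed
  qed (rule weight_pos[OF assms(2)])
  moreover have "(\<Sum>i=1..t. (real i - real m - 1) * weight l i) =
      (\<Sum>i=1..t. real i * weight l i) - (real m + 1) * weight_sum t l"
    unfolding weight_sum_def sum_distrib_left sum_subtractf[symmetric]
    by (rule sum.cong) (simp_all add: algebra_simps)
  ultimately have "(\<Sum>i=1..t. real i * weight l i) < (real m + 1) * weight_sum t l"
    by simp
  also have "\<dots> \<le> \<rho> * weight_sum t l"
    using m(3) weight_sum_pos[OF assms(2), of t] assms(1) by (intro mult_right_mono) auto
  finally show ?thesis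
    using weight_sum_pos[OF assms(2), of t] assms(1) by (simp add: weight_mean_def divide_simps)
qed

lemma xt_yt_location:
  assumes "2 \<le> t" "2 \<le> \<rho>" "0 < A" "A * exp A < real t - \<rho>" "real t - \<rho> \<le> real N"
  shows "xy_eqs t \<rho> (xt t \<rho>) (yt t \<rho>)"
    and "scale t \<le> 2 * 4 ^ N * exp (yt t \<rho>)"
    and "A * exp (yt t \<rho>) \<le> scale t"
proof -
  have t: "1 \<le> t"
    using assms(1) by simp
  define l1 where "l1 = scale t / (2 * 4 ^ N)"
  define l2 where "l2 = scale t / A"
  have l: "0 < l1" "0 < l2"
    using scale_pos[OF t] assms(3) by (simp_all add: l1_def l2_def)
  have lo: "weight_mean t l1 < \<rho>"
    using assms(2,5) by (intro weight_mean_lt[OF assms(1) l(1), of N]) (auto simp: l1_def)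
  have hi: "\<rho> < weight_mean t l2"
    using weight_mean_gt[OF t assms(3,4), of l2] assms(3) by (simp add: l2_def)
  have "l1 \<le> l2"
    using strict_mono_on_less[OF weight_mean_strict_mono[OF assms(1)], of l1 l2] l lo hi by simp
  note between = l(1) this less_imp_le[OF lo] less_imp_le[OF hi]
  show xy: "xy_eqs t \<rho> (xt t \<rho>) (yt t \<rho>)"
    unfolding xt_def yt_def by (rule theI'[OF xy_eqs_ex1[OF assms(1) between]])
  have "l1 \<le> exp (yt t \<rho>)" "exp (yt t \<rho>) \<le> l2"
    using xy_eqs_exp_between[OF assms(1) between xy] by auto
  then show "scale t \<le> 2 * 4 ^ N * exp (yt t \<rho>)" "A * exp (yt t \<rho>) \<le> scale t"
    using assms(3) by (simp_all add: l1_def l2_def field_simps)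
qed

lemma xy_eqs_peak_bound:
  assumes "xy_eqs t \<rho> x y" "1 \<le> t" "0 < A" "scale t \<le> A * exp y"
  shows "\<bar>x + real t * y - ln (d t)\<bar> \<le> A"
proof -
  define l where "l = exp y"
  have l: "0 < l"
    by (simp add: l_def)
  have Z: "0 < weight_sum t l"
    using weight_sum_pos[OF l assms(2)] .
  have "exp x = 1 / weight_sum t l"
    using assms(1,2) by (simp add: xy_eqs_iff l_def)
  then have "x = ln (1 / weight_sum t l)"
    by (metis ln_exp)
  also have "\<dots> = - ln (weight_sum t l)"
    using Z by (simp add: ln_div)
  finally have "x = - ln (weight_sum t l)" .
  moreover have "ln (weight l t) = real t * y - ln (d t)"
    using d_pos[of t] l by (simp add: weight_def ln_div ln_realpow l_def)
  ultimately have eq: "x + real t * y - ln (d t) = ln (weight l t) - ln (weight_sum t l)"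
    by simp
  have "ln (weight l t) \<le> ln (weight_sum t l)"
    using weight_le_weight_sum[OF l, of t t] assms(2) weight_pos[OF l, of t] by simp
  moreover have "ln (weight_sum t l) \<le> ln (weight l t * exp A)"
    using weight_sum_le_peak[OF assms(3) l] assms(4) Z weight_pos[OF l, of t]
    by (simp add: l_def)
  then have "ln (weight_sum t l) \<le> ln (weight l t) + A"
    using weight_pos[OF l, of t] by (simp add: ln_mult)
  ultimately show ?thesis
    unfolding eq by simp
qed


lemma abs_ln_diff_le:
  fixes u v :: real
  assumes "1 \<le> u" "1 \<le> v"
  shows "\<bar>ln u - ln v\<bar> \<le> \<bar>u - v\<bar>"
proof -
  have "ln u - ln v \<le> \<bar>u - v\<bar>" if "1 \<le> u" "1 \<le> v" for u v :: real
  proof -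
    have "ln u - ln v \<le> (u - v) / v"
      using that by (intro ln_diff_le) auto
    also have "\<dots> \<le> \<bar>u - v\<bar> / v"
      using that by (intro divide_right_mono) auto
    also have "\<dots> \<le> \<bar>u - v\<bar>"
      using that by (simp add: divide_le_eq mult_le_cancel_left1)
    finally show ?thesis .
  qed
  from this[OF assms] this[OF assms(2,1)] show ?thesis
    by (simp add: abs_minus_commute)
qed

lemma ln_d_increment_bound:
  assumes "1 \<le> t" "\<bar>y - ln (scale t)\<bar> \<le> D" "\<bar>real n - real t\<bar> \<le> C"
  shows "\<bar>(real (Suc n) * y - ln (d (Suc n))) - (real n * y - ln (d n))\<bar> \<le> D + 2 * (C + 1)"
proof -
  have "(real (Suc n) * y - ln (d (Suc n))) - (real n * y - ln (d n)) =
        (y - ln (scale t)) + (real t - 1 - real n) * ln 2 + (ln (real t) - ln (real (Suc n)))"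
    unfolding ln_d_Suc ln_scale[OF assms(1)] by (simp add: algebra_simps)
  also have "\<bar>\<dots>\<bar> \<le>
      \<bar>y - ln (scale t)\<bar> + \<bar>(real t - 1 - real n) * ln 2\<bar> + \<bar>ln (real t) - ln (real (Suc n))\<bar>"
    by (intro order_trans[OF abs_triangle_ineq] add_right_mono abs_triangle_ineq)
  also have "\<dots> \<le> D + (C + 1) + (C + 1)"
  proof (intro add_mono)
    have "\<bar>(real t - 1 - real n) * ln 2\<bar> \<le> \<bar>real t - 1 - real n\<bar>"
      using ln_le_minus_one[of 2] by (simp add: abs_mult mult_left_le)
    then show "\<bar>(real t - 1 - real n) * ln 2\<bar> \<le> C + 1"
      using assms(3) by linarith
    show "\<bar>ln (real t) - ln (real (Suc n))\<bar> \<le> C + 1"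
      using abs_ln_diff_le[of "real t" "real (Suc n)"] assms(1,3) by simp
  qed (rule assms(2))
  finally show ?thesis
    by simp
qed

lemma abs_diff_le_of_steps:
  fixes F :: "nat \<Rightarrow> real"
  assumes "m \<le> n" "\<And>i. m \<le> i \<Longrightarrow> i < n \<Longrightarrow> \<bar>F (Suc i) - F i\<bar> \<le> B"
  shows "\<bar>F n - F m\<bar> \<le> real (n - m) * B"
proof -
  have "\<bar>F n - F m\<bar> = \<bar>\<Sum>i=m..<n. F (Suc i) - F i\<bar>"
    using sum_Suc_diff'[OF assms(1), of F] by simp
  also have "\<dots> \<le> (\<Sum>i=m..<n. B)"
    using assms(2) by (intro order_trans[OF sum_abs sum_mono]) auto
  finally show ?thesis
    by simp
qed

lemma abs_diff_le_of_steps_near: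
  fixes F :: "nat \<Rightarrow> real"
  assumes "0 \<le> B" "\<bar>real a - real t\<bar> \<le> C"
    and "\<And>n. \<bar>real n - real t\<bar> \<le> C \<Longrightarrow> \<bar>F (Suc n) - F n\<bar> \<le> B"
  shows "\<bar>F a - F t\<bar> \<le> C * B"
proof (cases "t \<le> a")
  case True
  then have "\<bar>F a - F t\<bar> \<le> real (a - t) * B"
    using assms(2,3) by (intro abs_diff_le_of_steps) auto
  also have "\<dots> \<le> C * B"
    using True assms(1,2) by (intro mult_right_mono) (auto simp: of_nat_diff)
  finally show ?thesis .
next
  case False
  then have "\<bar>F t - F a\<bar> \<le> real (t - a) * B"
    using assms(2,3) by (intro abs_diff_le_of_steps) auto
  also have "\<dots> \<le> C * B"
    using False assms(1,2) by (intro mult_right_mono) (auto simp: of_nat_diff)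
  finally show ?thesis
    by (simp add: abs_minus_commute)
qed

lemma abs_diff_ln_le_of_exp_bounds:
  fixes A G s y :: real
  assumes "0 < A" "A \<le> 1" "1 \<le> G" "0 < s" "s \<le> G * exp y" "A * exp y \<le> s"
  shows "\<bar>y - ln s\<bar> \<le> ln G - ln A"
proof -
  have "ln s \<le> ln G + y" "ln A + y \<le> ln s"
    using assms ln_le_cancel_iff[of s "G * exp y"] ln_le_cancel_iff[of "A * exp y" s]
    by (simp_all add: ln_mult)
  moreover have "ln A \<le> 0" "0 \<le> ln G"
    using assms(1-3) by simp_all
  ultimately show ?thesis
    by linarith
qed

lemma exists_mult_exp_less: "0 < c \<Longrightarrow> \<exists>A::real. 0 < A \<and> A \<le> 1 \<and> A * exp A < c"
proof (intro exI conjI)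
  assume "0 < c"
  then show "0 < min 1 (c / 4)" "min 1 (c / 4) \<le> 1"
    by auto
  then have "min 1 (c / 4) * exp (min 1 (c / 4)) \<le> min 1 (c / 4) * 3"
    using order_trans[OF exp_le_cancel_iff[THEN iffD2] exp_le, of "min 1 (c / 4)"]
    by (intro mult_left_mono) auto
  also have "\<dots> < c"
    using \<open>0 < c\<close> by (simp add: min_def)
  finally show "min 1 (c / 4) * exp (min 1 (c / 4)) < c" .
qed

theorem lemma37:
  fixes c1 c2 C :: real
  assumes "0 < c1" and "c1 \<le> c2" and "0 \<le> C"
  shows "\<exists>K. \<forall>(t::nat) (\<rho>::real) (a::nat).
           0 < t \<longrightarrow> 2 \<le> \<rho> \<longrightarrow> c1 \<le> real t - \<rho> \<longrightarrow> real t - \<rho> \<le> c2 \<longrightarrow>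
           0 < a \<longrightarrow> \<bar>real a - real t\<bar> \<le> C \<longrightarrow>
           \<bar>xt t \<rho> + real a * yt t \<rho> - ln (d a)\<bar> \<le> K"
proof -
  obtain N :: nat where N: "c2 \<le> real N"
    using real_arch_simple by blast
  obtain A where A: "0 < A" "A \<le> 1" "A * exp A < c1"
    using exists_mult_exp_less[OF assms(1)] by blast
  define G :: real where "G = 2 * 4 ^ N"
  define B where "B = ln G - ln A + 2 * (C + 1)"
  have G: "1 \<le> G"
    unfolding G_def using one_le_power[of "4::real" N] by linarith
  have B: "0 \<le> B"
    unfolding B_def using A(1,2) G assms(3) by simp
  show ?thesis
  proof (intro exI[of _ "G + C * B"] allI impI)
    fix t \<rho> a
    assume H: "0 < t" "2 \<le> \<rho>" "c1 \<le> real t - \<rho>" "real t - \<rho> \<le> c2" "0 < a"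
      "\<bar>real a - real t\<bar> \<le> C"
    have t: "2 \<le> t"
      using H(2,3) assms(1) by linarith
    note location = xt_yt_location[OF t H(2) A(1), of N, folded G_def]
    define x y where "x = xt t \<rho>" and "y = yt t \<rho>"
    have peak: "\<bar>x + real t * y - ln (d t)\<bar> \<le> G"
      using xy_eqs_peak_bound location H(3,4) A(3) N G t unfolding x_def y_def by simp
    have "\<bar>y - ln (scale t)\<bar> \<le> ln G - ln A"
      using location H(3,4) A G N t unfolding y_def
      by (intro abs_diff_ln_le_of_exp_bounds) (auto intro: scale_pos)
    then have "\<bar>(real a * y - ln (d a)) - (real t * y - ln (d t))\<bar> \<le> C * B"
      using ln_d_increment_bound[of t y "ln G - ln A"] t unfolding B_def
      by (intro abs_diff_le_of_steps_near[where F = "\<lambda>n. real n * y - ln (d n)", OF _ H(6)])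
        (use B[unfolded B_def] in simp_all)
    with peak show "\<bar>xt t \<rho> + real a * yt t \<rho> - ln (d a)\<bar> \<le> G + C * B"
      unfolding x_def y_def abs_le_iff by (intro conjI; elim conjE; linarith)
  qed
qed

end
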